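(* Let $F$ be the class of functions computed by scalar-output $\ell_\infty$-dist nets with input dimension $d$, width $w\ge d$ and depth (number of hidden layers) $L$, with all parameters ranging over the reals. Then the VC dimension of $F$ satisfies $\mathrm{VCdim}(F)=\tilde O(L^2w^4)$.
   Context: An $\ell_\infty$-dist net takes $\mathbf x^{(0)}=\mathbf x\in\mathbb{R}^d$ and computes, for each layer $l$ and unit $k$, $x^{(l)}_k=\|\mathbf x^{(l-1)}-\mathbf w^{(l,k)}\|_\infty+b^{(l,k)}$ with real parameters $\mathbf w^{(l,k)}$, $b^{(l,k)}$; the width is the maximum number of units per layer. The VC dimension of a real-valued class is that of the associated sign classifiers $\mathbf x\mapsto\mathrm{sign}(g(\mathbf x))$. $\tilde O(\cdot)$ hides absolute constants and polylogarithmic factors. *)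

theory Defs
  imports Complex_Main "HOL-Library.Extended_Real"
begin

text \<open>Vectors in R^n are represented as real lists of length n.\<close>

definition linf_dist :: "real list \<Rightarrow> real list \<Rightarrow> real" where
  "linf_dist x v = foldr max (map (\<lambda>(a, c). \<bar>a - c\<bar>) (zip x v)) 0"

text \<open>A unit is a pair (weight vector, bias); a layer is a list of units.\<close>
type_synonym unit_param = "real list \<times> real"
type_synonym layer_param = "unit_param list"

definition unit_eval :: "real list \<Rightarrow> unit_param \<Rightarrow> real" where
  "unit_eval x u = linf_dist x (fst u) + snd u"

definition layer_eval :: "layer_param \<Rightarrow> real list \<Rightarrow> real list" where
  "layer_eval ly x = map (unit_eval x) ly"

definition net_eval :: "layer_param list \<Rightarrow> real list \<Rightarrow> real list" where
  "net_eval net x = foldl (\<lambda>y ly. layer_eval ly y) x net"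

text \<open>Well-formed net with layer sizes ns = [n_0, n_1, ..., n_K]: layer l has n_l units,
  each with a weight vector of length n_(l-1).\<close>
definition net_shape :: "nat list \<Rightarrow> layer_param list \<Rightarrow> bool" where
  "net_shape ns net \<longleftrightarrow> length ns = length net + 1 \<and>
     (\<forall>l < length net. length (net ! l) = ns ! (Suc l) \<and>
        (\<forall>u \<in> set (net ! l). length (fst u) = ns ! l))"

text \<open>Class of scalar-output l_inf-dist nets: input dimension d, L hidden layers
  each with between 1 and w units (so width at most w), followed by one output unit.\<close>
definition linf_net_class :: "nat \<Rightarrow> nat \<Rightarrow> nat \<Rightarrow> (real list \<Rightarrow> real) set" where
  "linf_net_class d w L =
     {(\<lambda>x. hd (net_eval net x)) | net hs.
        length hs = L \<and> (\<forall>h \<in> set hs. 1 \<le> h \<and> h \<le> w) \<and>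
        net_shape ([d] @ hs @ [1]) net}"

text \<open>Shattering by the sign classifiers x \<mapsto> sign(g x) (with sign 0 = +1),
  points taken in R^d.\<close>
definition shatters :: "nat \<Rightarrow> (real list \<Rightarrow> real) set \<Rightarrow> real list set \<Rightarrow> bool" where
  "shatters d F S \<longleftrightarrow> (\<forall>x \<in> S. length x = d) \<and>
     (\<forall>T \<subseteq> S. \<exists>g \<in> F. \<forall>x \<in> S. (g x \<ge> 0 \<longleftrightarrow> x \<in> T))"

definition VCdim :: "nat \<Rightarrow> (real list \<Rightarrow> real) set \<Rightarrow> ereal" where
  "VCdim d F = Sup {ereal (real (card S)) | S. finite S \<and> shatters d F S}"

end

theory Submission
  imports Defs
begin

text \<open>For a fixed architecture and a fixed input \<open>x\<close>, the output of an \<open>l\<^sub>\<infinity>\<close>-dist net is a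
  piecewise affine function of the parameter vector \<open>\<theta>\<close>: sums, absolute values and maxima of
  piecewise affine functions are piecewise affine, and each layer multiplies the number of pieces
  by at most \<open>2 w + 1\<close>. Hence the labels a net gives to the points of a finite set \<open>S\<close> are
  determined by the signs of \<open>|S| (2 w + 1)\<^bsup>O(L)\<^esup>\<close> affine functions of the
  \<open>(L + 1) w (w + 1)\<close> parameters. Since \<open>m\<close> affine functions of \<open>p\<close> variables have at most
  \<open>(m + 1)\<^sup>p\<close> sign patterns, a shattered \<open>S\<close> satisfies
  \<open>2\<^bsup>|S|\<^esup> \<le> w\<^sup>L (|S| (2 w + 1)\<^bsup>O(L)\<^esup>)\<^bsup>(L + 1) w (w + 1)\<^esup>\<close>, and taking logarithms gives
  \<open>|S| = O(L\<^sup>2 w\<^sup>4 log (L + w))\<close>.\<close>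

definition affine_in :: "'i set \<Rightarrow> (('i \<Rightarrow> real) \<Rightarrow> real) \<Rightarrow> bool" where
  "affine_in V f \<longleftrightarrow> (\<exists>a b. \<forall>\<theta>. f \<theta> = b + (\<Sum>i\<in>V. a i * \<theta> i))"

definition sign_pattern :: "(('i \<Rightarrow> real) \<Rightarrow> real) list \<Rightarrow> ('i \<Rightarrow> real) \<Rightarrow> bool list" where
  "sign_pattern fs \<theta> = map (\<lambda>f. 0 \<le> f \<theta>) fs"

lemma affine_in_const: "affine_in V (\<lambda>_. c)"
  unfolding affine_in_def by (intro exI[of _ "\<lambda>_. 0"] exI[of _ c]) simp

lemma affine_in_coord:
  assumes "finite V" "j \<in> V"
  shows "affine_in V (\<lambda>\<theta>. \<theta> j)"
proof -
  have "\<theta> j = 0 + (\<Sum>i\<in>V. of_bool (i = j) * \<theta> i)" for \<theta> :: "'a \<Rightarrow> real"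
    using assms by simp
  then show ?thesis
    unfolding affine_in_def by (intro exI[of _ "\<lambda>i. of_bool (i = j)"] exI[of _ 0]) blast
qed

lemma affine_in_add:
  assumes "affine_in V f" "affine_in V g"
  shows "affine_in V (\<lambda>\<theta>. f \<theta> + g \<theta>)"
proof -
  obtain a b c e where "\<And>\<theta>. f \<theta> = b + (\<Sum>i\<in>V. a i * \<theta> i)" "\<And>\<theta>. g \<theta> = e + (\<Sum>i\<in>V. c i * \<theta> i)"
    using assms unfolding affine_in_def by blast
  then show ?thesis
    unfolding affine_in_def
    by (intro exI[of _ "\<lambda>i. a i + c i"] exI[of _ "b + e"]) (simp add: sum.distrib algebra_simps)
qed

lemma affine_in_uminus:
  assumes "affine_in V f"
  shows "affine_in V (\<lambda>\<theta>. - f \<theta>)"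
proof -
  obtain a b where "\<And>\<theta>. f \<theta> = b + (\<Sum>i\<in>V. a i * \<theta> i)"
    using assms unfolding affine_in_def by blast
  then show ?thesis
    unfolding affine_in_def by (intro exI[of _ "\<lambda>i. - a i"] exI[of _ "- b"]) (simp add: sum_negf)
qed

lemma affine_in_diff: "affine_in V f \<Longrightarrow> affine_in V g \<Longrightarrow> affine_in V (\<lambda>\<theta>. f \<theta> - g \<theta>)"
  using affine_in_add[of V f "\<lambda>\<theta>. - g \<theta>"] affine_in_uminus[of V g] by simp

lemma affine_in_convex_comb:
  assumes "affine_in V f"
  shows "f (\<lambda>i. t * x i + (1 - t) * y i) = t * f x + (1 - t) * f y"
proof -
  from assms obtain a b where f: "\<And>\<theta>. f \<theta> = b + (\<Sum>i\<in>V. a i * \<theta> i)"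
    unfolding affine_in_def by blast
  have "(\<Sum>i\<in>V. a i * (t * x i + (1 - t) * y i))
      = t * (\<Sum>i\<in>V. a i * x i) + (1 - t) * (\<Sum>i\<in>V. a i * y i)"
    unfolding sum_distrib_left sum.distrib[symmetric] by (rule sum.cong) (simp_all add: algebra_simps)
  then show ?thesis
    unfolding f by (simp add: algebra_simps)
qed

text \<open>\<open>\<sigma>\<close> replaces \<open>\<theta> j\<close>, for a coordinate \<open>j\<close> on which \<open>f\<close> depends, by its value solved from
  \<open>f \<theta> = 0\<close>.\<close>
lemma affine_in_zero_set_reparam:
  assumes "finite V" "affine_in V f" "f \<theta>\<^sub>1 \<noteq> f \<theta>\<^sub>2"
  obtains j \<sigma> where "j \<in> V" "\<And>\<theta>. f \<theta> = 0 \<Longrightarrow> \<sigma> \<theta> = \<theta>"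
    "\<And>g. affine_in V g \<Longrightarrow> affine_in (V - {j}) (\<lambda>\<theta>. g (\<sigma> \<theta>))"
proof -
  from assms(2) obtain a b where f: "\<And>\<theta>. f \<theta> = b + (\<Sum>i\<in>V. a i * \<theta> i)"
    unfolding affine_in_def by blast
  obtain j where j: "j \<in> V" "a j \<noteq> 0"
    using assms(3) unfolding f by (metis (mono_tags, lifting) mult_eq_0_iff sum.neutral)
  have split: "(\<Sum>i\<in>V. c i * \<theta> i) = c j * \<theta> j + (\<Sum>i\<in>V - {j}. c i * \<theta> i)" for c \<theta>
    using assms(1) j(1) by (simp add: sum.remove)
  define \<sigma> where "\<sigma> \<theta> = \<theta>(j := - (b + (\<Sum>i\<in>V - {j}. a i * \<theta> i)) / a j)" for \<theta>
  have \<sigma>_other: "(\<Sum>i\<in>V - {j}. c i * \<sigma> \<theta> i) = (\<Sum>i\<in>V - {j}. c i * \<theta> i)" for c \<theta>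
    by (rule sum.cong) (auto simp: \<sigma>_def)
  show thesis
  proof
    show "j \<in> V" by fact
    show "\<sigma> \<theta> = \<theta>" if "f \<theta> = 0" for \<theta>
      using that j(2) unfolding f split \<sigma>_def by (auto simp: field_simps)
    show "affine_in (V - {j}) (\<lambda>\<theta>. g (\<sigma> \<theta>))" if "affine_in V g" for g
    proof -
      from that obtain c e where g: "\<And>\<theta>. g \<theta> = e + (\<Sum>i\<in>V. c i * \<theta> i)"
        unfolding affine_in_def by blast
      have "g (\<sigma> \<theta>) = (e - c j * b / a j) + (\<Sum>i\<in>V - {j}. (c i - c j * a i / a j) * \<theta> i)" for \<theta>
        using j(2) unfolding g split \<sigma>_other
        by (simp add: \<sigma>_def algebra_simps sum_subtractf sum_distrib_left sum_divide_distrib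
            diff_divide_distrib add_divide_distrib)
      then show ?thesis
        unfolding affine_in_def by (intro exI[of _ "\<lambda>i. c i - c j * a i / a j"] exI) blast
    qed
  qed
qed

lemma finite_range_sign_pattern: "finite (range (sign_pattern fs))"
proof -
  have "range (sign_pattern fs) \<subseteq> {bs. set bs \<subseteq> UNIV \<and> length bs = length fs}"
    by (auto simp: sign_pattern_def)
  then show ?thesis
    using finite_lists_length_eq[of "UNIV :: bool set"] finite_subset by auto
qed

lemma sign_pattern_crossing:
  assumes "affine_in V f" "\<forall>g\<in>set gs. affine_in V g"
    and "0 \<le> f \<theta>\<^sub>1" "f \<theta>\<^sub>2 < 0" "sign_pattern gs \<theta>\<^sub>1 = sign_pattern gs \<theta>\<^sub>2"
  shows "\<exists>\<theta>. f \<theta> = 0 \<and> sign_pattern gs \<theta> = sign_pattern gs \<theta>\<^sub>1"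
proof -
  define t where "t = f \<theta>\<^sub>1 / (f \<theta>\<^sub>1 - f \<theta>\<^sub>2)"
  have t: "0 \<le> t" "t < 1"
    using assms(3,4) by (auto simp: t_def field_simps)
  define \<theta> where "\<theta> = (\<lambda>i. t * \<theta>\<^sub>2 i + (1 - t) * \<theta>\<^sub>1 i)"
  have "f \<theta> = 0"
    using assms(3,4) unfolding \<theta>_def affine_in_convex_comb[OF assms(1)]
    by (simp add: t_def field_simps)
  moreover have "(0 \<le> g \<theta>) = (0 \<le> g \<theta>\<^sub>1)" if "g \<in> set gs" for g
  proof -
    have "(0 \<le> g \<theta>\<^sub>1) = (0 \<le> g \<theta>\<^sub>2)"
      using assms(5) that by (auto simp: sign_pattern_def)
    moreover have "g \<theta> = t * g \<theta>\<^sub>2 + (1 - t) * g \<theta>\<^sub>1"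
      unfolding \<theta>_def using assms(2) that by (simp add: affine_in_convex_comb[of V g])
    ultimately show ?thesis
      using t by (smt (verit) mult_nonneg_nonneg mult_pos_neg mult_nonneg_nonpos)
  qed
  ultimately show ?thesis
    by (auto simp: sign_pattern_def)
qed

lemma card_sign_patterns_Cons_le:
  assumes "affine_in V f" "\<forall>g\<in>set gs. affine_in V g"
  shows "card (range (sign_pattern (f # gs)))
    \<le> card (range (sign_pattern gs)) + card (sign_pattern gs ` {\<theta>. f \<theta> = 0})"
proof -
  define A where "A = {p. True # p \<in> range (sign_pattern (f # gs))}"
  define B where "B = {p. False # p \<in> range (sign_pattern (f # gs))}"
  have AB: "A \<union> B \<subseteq> range (sign_pattern gs)"
    by (auto simp: A_def B_def sign_pattern_def)
  then have fin: "finite A" "finite B"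
    using finite_range_sign_pattern finite_subset by blast+
  have "A \<inter> B \<subseteq> sign_pattern gs ` {\<theta>. f \<theta> = 0}"
  proof
    fix p assume "p \<in> A \<inter> B"
    then have "True # p \<in> range (sign_pattern (f # gs))" "False # p \<in> range (sign_pattern (f # gs))"
      by (auto simp: A_def B_def)
    then obtain \<theta>\<^sub>1 \<theta>\<^sub>2 where "True # p = sign_pattern (f # gs) \<theta>\<^sub>1" "False # p = sign_pattern (f # gs) \<theta>\<^sub>2"
      by blast
    then have "0 \<le> f \<theta>\<^sub>1" "f \<theta>\<^sub>2 < 0" "sign_pattern gs \<theta>\<^sub>1 = p" "sign_pattern gs \<theta>\<^sub>2 = p"
      by (auto simp: sign_pattern_def)
    then obtain \<theta> where "f \<theta> = 0" "sign_pattern gs \<theta> = p"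
      using sign_pattern_crossing[OF assms] by metis
    then show "p \<in> sign_pattern gs ` {\<theta>. f \<theta> = 0}"
      by blast
  qed
  then have "card (A \<inter> B) \<le> card (sign_pattern gs ` {\<theta>. f \<theta> = 0})"
    by (intro card_mono finite_subset[OF _ finite_range_sign_pattern]) auto
  moreover have "card (A \<union> B) \<le> card (range (sign_pattern gs))"
    by (intro card_mono AB finite_range_sign_pattern)
  moreover have "card (range (sign_pattern (f # gs))) \<le> card A + card B"
  proof -
    have "range (sign_pattern (f # gs)) \<subseteq> Cons True ` A \<union> Cons False ` B"
      by (auto simp: A_def B_def sign_pattern_def)
    then have "card (range (sign_pattern (f # gs))) \<le> card (Cons True ` A \<union> Cons False ` B)"
      using fin by (intro card_mono) auto
    also have "\<dots> \<le> card A + card B"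
      using card_Un_le card_image_le[OF fin(1)] card_image_le[OF fin(2)] by (metis add_mono order_trans)
    finally show ?thesis .
  qed
  ultimately show ?thesis
    using card_Un_Int[OF fin] by linarith
qed

lemma pow_Suc_add_pow_le: "(m + 1 :: nat) ^ p + (m + 1) ^ (p - 1) \<le> (m + 2) ^ p" if "1 \<le> p"
proof -
  have "(m + 1) ^ p + (m + 1) ^ (p - 1) = (m + 2) * (m + 1) ^ (p - 1)"
    using that by (cases p) auto
  also have "\<dots> \<le> (m + 2) * (m + 2) ^ (p - 1)"
    by (intro mult_le_mono2 power_mono) auto
  also have "\<dots> = (m + 2) ^ p"
    using that by (cases p) auto
  finally show ?thesis .
qed

text \<open>A new affine function \<open>f\<close> splits only the sign cells it crosses; these are counted by the
  sign patterns on the zero set of \<open>f\<close>, an affine space of one dimension less.\<close>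
lemma card_sign_patterns_le:
  assumes "finite V" "\<forall>f\<in>set fs. affine_in V f"
  shows "card (range (sign_pattern fs)) \<le> (length fs + 1) ^ card V"
  using assms
proof (induction "length fs" arbitrary: fs V)
  case 0
  then show ?case
    by (simp add: sign_pattern_def)
next
  case (Suc n)
  then obtain f gs where fs: "fs = f # gs" and n: "length gs = n"
    by (metis length_Suc_conv)
  have f: "affine_in V f" and gs: "\<forall>g\<in>set gs. affine_in V g"
    using Suc.prems(2) fs by auto
  have IH: "card (range (sign_pattern gs)) \<le> (n + 1) ^ card V"
    using Suc.hyps(1)[OF n[symmetric] Suc.prems(1) gs] n by simp
  have "card (range (sign_pattern (f # gs))) \<le> (n + 2) ^ card V"
  proof (cases "\<exists>\<theta>\<^sub>1 \<theta>\<^sub>2. f \<theta>\<^sub>1 \<noteq> f \<theta>\<^sub>2")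
    case False
    then have "sign_pattern (f # gs) \<theta> = (0 \<le> f undefined) # sign_pattern gs \<theta>" for \<theta>
      by (simp add: sign_pattern_def) metis
    then have "sign_pattern (f # gs) = Cons (0 \<le> f undefined) \<circ> sign_pattern gs"
      by (simp add: fun_eq_iff)
    then have "card (range (sign_pattern (f # gs))) \<le> card (range (sign_pattern gs))"
      by (metis card_image_le finite_range_sign_pattern image_comp)
    also have "\<dots> \<le> (n + 2) ^ card V"
      using IH power_mono[of "n + 1" "n + 2" "card V"] by linarith
    finally show ?thesis .
  next
    case True
    then obtain j \<sigma> where j: "j \<in> V" and \<sigma>: "\<And>\<theta>. f \<theta> = 0 \<Longrightarrow> \<sigma> \<theta> = \<theta>"
      and \<sigma>_affine: "\<And>g. affine_in V g \<Longrightarrow> affine_in (V - {j}) (\<lambda>\<theta>. g (\<sigma> \<theta>))"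
      using affine_in_zero_set_reparam[OF Suc.prems(1) f] by blast
    define hs where "hs = map (\<lambda>g \<theta>. g (\<sigma> \<theta>)) gs"
    have "sign_pattern gs \<theta> = sign_pattern hs \<theta>" if "f \<theta> = 0" for \<theta>
      using \<sigma>[OF that] by (simp add: hs_def sign_pattern_def)
    then have "sign_pattern gs ` {\<theta>. f \<theta> = 0} \<subseteq> range (sign_pattern hs)"
      by auto
    then have "card (sign_pattern gs ` {\<theta>. f \<theta> = 0}) \<le> card (range (sign_pattern hs))"
      by (intro card_mono finite_range_sign_pattern)
    also have "\<dots> \<le> (n + 1) ^ (card V - 1)"
      using Suc.hyps(1)[of hs "V - {j}"] Suc.prems(1) gs \<sigma>_affine j n by (auto simp: hs_def)
    finally have "card (range (sign_pattern (f # gs))) \<le> (n + 1) ^ card V + (n + 1) ^ (card V - 1)"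
      using card_sign_patterns_Cons_le[OF f gs] IH by linarith
    also have "\<dots> \<le> (n + 2) ^ card V"
      using pow_Suc_add_pow_le[where m = n and p = "card V"] Suc.prems(1) j
      by (metis One_nat_def Suc_leI card_gt_0_iff empty_iff)
    finally show ?thesis .
  qed
  then show ?case
    using fs n by simp
qed

lemma sign_pattern_eq_subset:
  "sign_pattern H \<theta> = sign_pattern H \<theta>' \<Longrightarrow> set G \<subseteq> set H \<Longrightarrow> sign_pattern G \<theta> = sign_pattern G \<theta>'"
  by (auto simp: sign_pattern_def map_eq_conv)

lemma sign_pattern_eq_member:
  "sign_pattern H \<theta> = sign_pattern H \<theta>' \<Longrightarrow> g \<in> set H \<Longrightarrow> (0 \<le> g \<theta>) = (0 \<le> g \<theta>')"
  by (auto simp: sign_pattern_def map_eq_conv)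

definition affine_pieces ::
    "'i set \<Rightarrow> (('i \<Rightarrow> real) \<Rightarrow> real) list \<Rightarrow> (('i \<Rightarrow> real) \<Rightarrow> real) list \<Rightarrow> (('i \<Rightarrow> real) \<Rightarrow> real) \<Rightarrow> bool"
  where "affine_pieces V G As v \<longleftrightarrow> (\<forall>g\<in>set G. affine_in V g) \<and> (\<forall>a\<in>set As. affine_in V a) \<and>
    (\<forall>\<theta> \<theta>'. sign_pattern G \<theta> = sign_pattern G \<theta>' \<longrightarrow> (\<exists>a\<in>set As. v \<theta> = a \<theta> \<and> v \<theta>' = a \<theta>'))"

text \<open>At most \<open>M\<close> affine pieces on the cells of at most \<open>M\<^sup>2\<close> affine functions; the square
  is what makes the class closed under \<open>max\<close>, whose pieces are compared pairwise.\<close>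
definition piecewise_affine :: "'i set \<Rightarrow> nat \<Rightarrow> (('i \<Rightarrow> real) \<Rightarrow> real) \<Rightarrow> bool" where
  "piecewise_affine V M v \<longleftrightarrow> (\<exists>G As. length G \<le> M\<^sup>2 \<and> length As \<le> M \<and> affine_pieces V G As v)"

lemma piecewise_affine_mono: "piecewise_affine V M v \<Longrightarrow> M \<le> M' \<Longrightarrow> piecewise_affine V M' v"
  unfolding piecewise_affine_def by (meson order_trans power_mono zero_le)

lemma piecewise_affine_const: "piecewise_affine V 1 (\<lambda>_. c)"
  unfolding piecewise_affine_def affine_pieces_def
  by (intro exI[of _ "[]"] exI[of _ "[\<lambda>_. c]"]) (simp add: affine_in_const)

lemma piecewise_affine_add_affine:
  assumes "piecewise_affine V M v" "affine_in V h"
  shows "piecewise_affine V M (\<lambda>\<theta>. v \<theta> + h \<theta>)"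
proof -
  obtain G As where "length G \<le> M\<^sup>2" "length As \<le> M" "affine_pieces V G As v"
    using assms(1) unfolding piecewise_affine_def by blast
  moreover from this(3) have "affine_pieces V G (map (\<lambda>a \<theta>. a \<theta> + h \<theta>) As) (\<lambda>\<theta>. v \<theta> + h \<theta>)"
    using assms(2) unfolding affine_pieces_def by (fastforce intro: affine_in_add)
  ultimately show ?thesis
    unfolding piecewise_affine_def by (metis length_map)
qed

lemma piecewise_affine_diff_affine:
  "piecewise_affine V M v \<Longrightarrow> affine_in V h \<Longrightarrow> piecewise_affine V M (\<lambda>\<theta>. v \<theta> - h \<theta>)"
  using piecewise_affine_add_affine[of V M v "\<lambda>\<theta>. - h \<theta>"] affine_in_uminus[of V h] by simp

lemma piecewise_affine_abs:
  assumes "piecewise_affine V M v"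
  shows "piecewise_affine V (2 * M) (\<lambda>\<theta>. \<bar>v \<theta>\<bar>)"
proof -
  obtain G As where G: "length G \<le> M\<^sup>2" "length As \<le> M" "affine_pieces V G As v"
    using assms unfolding piecewise_affine_def by blast
  have "affine_pieces V (G @ As) (As @ map (\<lambda>a \<theta>. - a \<theta>) As) (\<lambda>\<theta>. \<bar>v \<theta>\<bar>)"
    unfolding affine_pieces_def
  proof (intro conjI allI impI)
    show "\<forall>g\<in>set (G @ As). affine_in V g" "\<forall>a\<in>set (As @ map (\<lambda>a \<theta>. - a \<theta>) As). affine_in V a"
      using G(3) by (auto simp: affine_pieces_def intro: affine_in_uminus)
    fix \<theta> \<theta>' assume same: "sign_pattern (G @ As) \<theta> = sign_pattern (G @ As) \<theta>'"
    then have "sign_pattern G \<theta> = sign_pattern G \<theta>'"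
      by (rule sign_pattern_eq_subset) auto
    then obtain a where a: "a \<in> set As" "v \<theta> = a \<theta>" "v \<theta>' = a \<theta>'"
      using G(3) unfolding affine_pieces_def by blast
    moreover have "(0 \<le> a \<theta>) = (0 \<le> a \<theta>')"
      using same by (rule sign_pattern_eq_member) (simp add: a(1))
    ultimately show "\<exists>b\<in>set (As @ map (\<lambda>a \<theta>. - a \<theta>) As). \<bar>v \<theta>\<bar> = b \<theta> \<and> \<bar>v \<theta>'\<bar> = b \<theta>'"
      by (cases "0 \<le> a \<theta>") force+
  qed
  moreover have "length (G @ As) \<le> (2 * M)\<^sup>2"
  proof -
    have "length (G @ As) \<le> M * M + M"
      using G(1,2) by (simp add: power2_eq_square)
    also have "\<dots> \<le> (2 * M)\<^sup>2"
      using le_square[of M] by (simp add: power2_eq_square)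
    finally show ?thesis .
  qed
  moreover have "length (As @ map (\<lambda>a \<theta>. - a \<theta>) As) \<le> 2 * M"
    using G(2) by simp
  ultimately show ?thesis
    unfolding piecewise_affine_def by blast
qed

lemma piecewise_affine_max:
  assumes "piecewise_affine V M\<^sub>1 u" "piecewise_affine V M\<^sub>2 v"
  shows "piecewise_affine V (M\<^sub>1 + M\<^sub>2) (\<lambda>\<theta>. max (u \<theta>) (v \<theta>))"
proof -
  obtain G\<^sub>1 As\<^sub>1 G\<^sub>2 As\<^sub>2 where
    G\<^sub>1: "length G\<^sub>1 \<le> M\<^sub>1\<^sup>2" "length As\<^sub>1 \<le> M\<^sub>1" "affine_pieces V G\<^sub>1 As\<^sub>1 u" and
    G\<^sub>2: "length G\<^sub>2 \<le> M\<^sub>2\<^sup>2" "length As\<^sub>2 \<le> M\<^sub>2" "affine_pieces V G\<^sub>2 As\<^sub>2 v"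
    using assms unfolding piecewise_affine_def by blast
  define D where "D = concat (map (\<lambda>a. map (\<lambda>b \<theta>. a \<theta> - b \<theta>) As\<^sub>2) As\<^sub>1)"
  have "affine_pieces V (G\<^sub>1 @ G\<^sub>2 @ D) (As\<^sub>1 @ As\<^sub>2) (\<lambda>\<theta>. max (u \<theta>) (v \<theta>))"
    unfolding affine_pieces_def
  proof (intro conjI allI impI)
    show "\<forall>g\<in>set (G\<^sub>1 @ G\<^sub>2 @ D). affine_in V g" "\<forall>a\<in>set (As\<^sub>1 @ As\<^sub>2). affine_in V a"
      using G\<^sub>1(3) G\<^sub>2(3) by (auto simp: affine_pieces_def D_def intro: affine_in_diff)
    fix \<theta> \<theta>' assume same: "sign_pattern (G\<^sub>1 @ G\<^sub>2 @ D) \<theta> = sign_pattern (G\<^sub>1 @ G\<^sub>2 @ D) \<theta>'"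
    then have "sign_pattern G\<^sub>1 \<theta> = sign_pattern G\<^sub>1 \<theta>'" "sign_pattern G\<^sub>2 \<theta> = sign_pattern G\<^sub>2 \<theta>'"
      by (auto elim: sign_pattern_eq_subset)
    then obtain a b where a: "a \<in> set As\<^sub>1" "u \<theta> = a \<theta>" "u \<theta>' = a \<theta>'"
      and b: "b \<in> set As\<^sub>2" "v \<theta> = b \<theta>" "v \<theta>' = b \<theta>'"
      using G\<^sub>1(3) G\<^sub>2(3) unfolding affine_pieces_def by blast
    moreover have "(\<lambda>\<theta>. a \<theta> - b \<theta>) \<in> set D"
      using a(1) b(1) by (auto simp: D_def)
    then have "(b \<theta> \<le> a \<theta>) = (b \<theta>' \<le> a \<theta>')"
      using sign_pattern_eq_member[OF same, of "\<lambda>\<theta>. a \<theta> - b \<theta>"] by simp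
    ultimately show "\<exists>c\<in>set (As\<^sub>1 @ As\<^sub>2). max (u \<theta>) (v \<theta>) = c \<theta> \<and> max (u \<theta>') (v \<theta>') = c \<theta>'"
      by (cases "b \<theta> \<le> a \<theta>") (auto simp: max_def)
  qed
  moreover have "length D = length As\<^sub>1 * length As\<^sub>2"
    unfolding D_def by (induction As\<^sub>1) auto
  then have "length (G\<^sub>1 @ G\<^sub>2 @ D) \<le> (M\<^sub>1 + M\<^sub>2)\<^sup>2"
    using G\<^sub>1(1,2) G\<^sub>2(1,2) mult_le_mono[of "length As\<^sub>1" M\<^sub>1 "length As\<^sub>2" M\<^sub>2]
    by (simp add: power2_eq_square algebra_simps)
  moreover have "length (As\<^sub>1 @ As\<^sub>2) \<le> M\<^sub>1 + M\<^sub>2"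
    using G\<^sub>1(2) G\<^sub>2(2) by simp
  ultimately show ?thesis
    unfolding piecewise_affine_def by blast
qed

lemma piecewise_affine_foldr_max:
  assumes "\<forall>h\<in>set hs. piecewise_affine V M h"
  shows "piecewise_affine V (1 + length hs * M) (\<lambda>\<theta>. foldr max (map (\<lambda>h. h \<theta>) hs) 0)"
  using assms
proof (induction hs)
  case Nil
  then show ?case
    using piecewise_affine_const[of V 0] by simp
next
  case (Cons h hs)
  then have "piecewise_affine V (M + (1 + length hs * M))
      (\<lambda>\<theta>. max (h \<theta>) (foldr max (map (\<lambda>h. h \<theta>) hs) 0))"
    by (intro piecewise_affine_max) auto
  then show ?case
    by (simp add: algebra_simps)
qed

definition determined_by_signs :: "'i set \<Rightarrow> nat \<Rightarrow> (('i \<Rightarrow> real) \<Rightarrow> 'b) \<Rightarrow> bool" where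
  "determined_by_signs V B Q \<longleftrightarrow> (\<exists>G. length G \<le> B \<and> (\<forall>g\<in>set G. affine_in V g) \<and>
     (\<forall>\<theta> \<theta>'. sign_pattern G \<theta> = sign_pattern G \<theta>' \<longrightarrow> Q \<theta> = Q \<theta>'))"

lemma determined_by_signs_sign:
  assumes "piecewise_affine V M v"
  shows "determined_by_signs V (M\<^sup>2 + M) (\<lambda>\<theta>. 0 \<le> v \<theta>)"
proof -
  obtain G As where G: "length G \<le> M\<^sup>2" "length As \<le> M" "affine_pieces V G As v"
    using assms unfolding piecewise_affine_def by blast
  have "(0 \<le> v \<theta>) = (0 \<le> v \<theta>')" if same: "sign_pattern (G @ As) \<theta> = sign_pattern (G @ As) \<theta>'" for \<theta> \<theta>'
  proof -
    have "sign_pattern G \<theta> = sign_pattern G \<theta>'"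
      using same by (rule sign_pattern_eq_subset) auto
    then obtain a where "a \<in> set As" "v \<theta> = a \<theta>" "v \<theta>' = a \<theta>'"
      using G(3) unfolding affine_pieces_def by blast
    then show ?thesis
      using sign_pattern_eq_member[OF same, of a] by simp
  qed
  moreover have "\<forall>g\<in>set (G @ As). affine_in V g"
    using G(3) by (auto simp: affine_pieces_def)
  moreover have "length (G @ As) \<le> M\<^sup>2 + M"
    using G(1,2) by simp
  ultimately show ?thesis
    unfolding determined_by_signs_def by blast
qed

lemma determined_by_signs_const: "determined_by_signs V 0 (\<lambda>_. c)"
  unfolding determined_by_signs_def by (intro exI[of _ "[]"]) simp

lemma determined_by_signs_comp:
  assumes "determined_by_signs V B Q"
  shows "determined_by_signs V B (\<lambda>\<theta>. h (Q \<theta>))"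
  using assms unfolding determined_by_signs_def by metis

lemma determined_by_signs_pair:
  assumes "determined_by_signs V B\<^sub>1 Q\<^sub>1" "determined_by_signs V B\<^sub>2 Q\<^sub>2"
  shows "determined_by_signs V (B\<^sub>1 + B\<^sub>2) (\<lambda>\<theta>. (Q\<^sub>1 \<theta>, Q\<^sub>2 \<theta>))"
proof -
  obtain G\<^sub>1 G\<^sub>2 where G\<^sub>1: "length G\<^sub>1 \<le> B\<^sub>1" "\<forall>g\<in>set G\<^sub>1. affine_in V g"
      "\<And>\<theta> \<theta>'. sign_pattern G\<^sub>1 \<theta> = sign_pattern G\<^sub>1 \<theta>' \<Longrightarrow> Q\<^sub>1 \<theta> = Q\<^sub>1 \<theta>'"
    and G\<^sub>2: "length G\<^sub>2 \<le> B\<^sub>2" "\<forall>g\<in>set G\<^sub>2. affine_in V g"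
      "\<And>\<theta> \<theta>'. sign_pattern G\<^sub>2 \<theta> = sign_pattern G\<^sub>2 \<theta>' \<Longrightarrow> Q\<^sub>2 \<theta> = Q\<^sub>2 \<theta>'"
    using assms unfolding determined_by_signs_def by blast
  have "(Q\<^sub>1 \<theta>, Q\<^sub>2 \<theta>) = (Q\<^sub>1 \<theta>', Q\<^sub>2 \<theta>')"
    if "sign_pattern (G\<^sub>1 @ G\<^sub>2) \<theta> = sign_pattern (G\<^sub>1 @ G\<^sub>2) \<theta>'" for \<theta> \<theta>'
    using G\<^sub>1(3) G\<^sub>2(3) sign_pattern_eq_subset[OF that] by (metis Un_upper1 Un_upper2 set_append)
  moreover have "length (G\<^sub>1 @ G\<^sub>2) \<le> B\<^sub>1 + B\<^sub>2" "\<forall>g\<in>set (G\<^sub>1 @ G\<^sub>2). affine_in V g"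
    using G\<^sub>1 G\<^sub>2 by auto
  ultimately show ?thesis
    unfolding determined_by_signs_def by blast
qed

lemma determined_by_signs_Collect:
  assumes "finite S" "\<forall>x\<in>S. determined_by_signs V B (Q x)"
  shows "determined_by_signs V (card S * B) (\<lambda>\<theta>. {x\<in>S. Q x \<theta>})"
  using assms
proof (induction S rule: finite_induct)
  case empty
  then show ?case
    using determined_by_signs_const[of V "{}"] by simp
next
  case (insert x S)
  have "{y\<in>insert x S. Q y \<theta>} = (if Q x \<theta> then insert x else id) {y\<in>S. Q y \<theta>}" for \<theta>
    by auto
  moreover have "determined_by_signs V (B + card S * B) (\<lambda>\<theta>. (Q x \<theta>, {y\<in>S. Q y \<theta>}))"
    using insert by (intro determined_by_signs_pair) auto
  then have "determined_by_signs V (B + card S * B)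
      (\<lambda>\<theta>. (\<lambda>(b, T). (if b then insert x else id) T) (Q x \<theta>, {y\<in>S. Q y \<theta>}))"
    by (rule determined_by_signs_comp)
  ultimately show ?case
    using insert by simp
qed

lemma card_range_le_if_determined_by_signs:
  assumes "finite V" "determined_by_signs V B Q"
  shows "card (range Q) \<le> (B + 1) ^ card V"
proof -
  obtain G where G: "length G \<le> B" "\<forall>g\<in>set G. affine_in V g"
    "\<And>\<theta> \<theta>'. sign_pattern G \<theta> = sign_pattern G \<theta>' \<Longrightarrow> Q \<theta> = Q \<theta>'"
    using assms(2) unfolding determined_by_signs_def by blast
  have "Q \<theta> = Q (inv (sign_pattern G) (sign_pattern G \<theta>))" for \<theta>
    by (rule G(3)) (simp add: f_inv_into_f)
  then have "range Q \<subseteq> (\<lambda>p. Q (inv (sign_pattern G) p)) ` range (sign_pattern G)"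
    by blast
  then have "card (range Q) \<le> card ((\<lambda>p. Q (inv (sign_pattern G) p)) ` range (sign_pattern G))"
    by (intro card_mono finite_imageI finite_range_sign_pattern)
  also have "\<dots> \<le> card (range (sign_pattern G))"
    by (rule card_image_le[OF finite_range_sign_pattern])
  also have "\<dots> \<le> (length G + 1) ^ card V"
    using card_sign_patterns_le[OF assms(1) G(2)] .
  also have "\<dots> \<le> (B + 1) ^ card V"
    using G(1) by (simp add: power_mono)
  finally show ?thesis .
qed

lemma piecewise_affine_unit_eval:
  assumes "\<forall>f\<in>set Fs. piecewise_affine V M f" "length Ws = length Fs"
    "\<forall>w\<in>set Ws. affine_in V w" "affine_in V b"
  shows "piecewise_affine V (1 + length Fs * (2 * M))
    (\<lambda>\<theta>. unit_eval (map (\<lambda>f. f \<theta>) Fs) (map (\<lambda>w. w \<theta>) Ws, b \<theta>))"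
proof -
  define hs where "hs = map (\<lambda>p \<theta>. \<bar>fst p \<theta> - snd p \<theta>\<bar>) (zip Fs Ws)"
  have unit: "unit_eval (map (\<lambda>f. f \<theta>) Fs) (map (\<lambda>w. w \<theta>) Ws, b \<theta>)
      = foldr max (map (\<lambda>h. h \<theta>) hs) 0 + b \<theta>" for \<theta>
    by (simp add: unit_eval_def linf_dist_def hs_def zip_map_map comp_def case_prod_unfold)
  have "piecewise_affine V (2 * M) h" if h: "h \<in> set hs" for h
  proof -
    obtain p where p: "p \<in> set (zip Fs Ws)" "h = (\<lambda>\<theta>. \<bar>fst p \<theta> - snd p \<theta>\<bar>)"
      using h by (auto simp: hs_def)
    then have "fst p \<in> set Fs" "snd p \<in> set Ws"
      by (metis prod.collapse set_zip_leftD set_zip_rightD)+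
    then show ?thesis
      using assms(1,3) piecewise_affine_abs[OF piecewise_affine_diff_affine] p(2) by blast
  qed
  then have "piecewise_affine V (1 + length hs * (2 * M)) (\<lambda>\<theta>. foldr max (map (\<lambda>h. h \<theta>) hs) 0)"
    by (intro piecewise_affine_foldr_max) blast
  moreover have "length hs = length Fs"
    using assms(2) by (simp add: hs_def)
  ultimately show ?thesis
    unfolding unit using piecewise_affine_add_affine[OF _ assms(4)] by simp
qed

text \<open>Weight \<open>i\<close> of unit \<open>k\<close> in layer \<open>l\<close> is \<open>\<theta> (l, k, i)\<close>, its bias is \<open>\<theta> (l, k, n\<^sub>l)\<close>.\<close>
definition net_of_params :: "nat list \<Rightarrow> (nat \<times> nat \<times> nat \<Rightarrow> real) \<Rightarrow> layer_param list" where
  "net_of_params ns \<theta> = map (\<lambda>l. map (\<lambda>k. (map (\<lambda>i. \<theta> (l, k, i)) [0..<ns ! l], \<theta> (l, k, ns ! l)))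
     [0..<ns ! Suc l]) [0..<length ns - 1]"

lemma net_of_params_surj:
  assumes "net_shape ns net"
  obtains \<theta> where "net_of_params ns \<theta> = net"
proof
  define \<theta> where "\<theta> = (\<lambda>(l, k, i). if i < ns ! l then fst (net ! l ! k) ! i else snd (net ! l ! k))"
  have len: "length net = length ns - 1" "\<And>l. l < length net \<Longrightarrow> length (net ! l) = ns ! Suc l"
    and len_unit: "\<And>l u. l < length net \<Longrightarrow> u \<in> set (net ! l) \<Longrightarrow> length (fst u) = ns ! l"
    using assms by (auto simp: net_shape_def)
  show "net_of_params ns \<theta> = net"
  proof (rule nth_equalityI)
    show "length (net_of_params ns \<theta>) = length net"
      using len by (simp add: net_of_params_def)
    fix l assume "l < length (net_of_params ns \<theta>)"
    then have l: "l < length net"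
      using len by (simp add: net_of_params_def)
    show "net_of_params ns \<theta> ! l = net ! l"
    proof (rule nth_equalityI)
      show "length (net_of_params ns \<theta> ! l) = length (net ! l)"
        using l len by (simp add: net_of_params_def)
      fix k assume "k < length (net_of_params ns \<theta> ! l)"
      then have k: "k < length (net ! l)"
        using l len by (simp add: net_of_params_def)
      then have "length (fst (net ! l ! k)) = ns ! l"
        using len_unit[OF l] by simp
      then show "net_of_params ns \<theta> ! l ! k = net ! l ! k"
        using l k len by (auto simp: net_of_params_def \<theta>_def intro!: prod_eqI nth_equalityI)
    qed
  qed
qed

lemma net_eval_take_Suc:
  assumes "l < length ns - 1"
  shows "net_eval (take (Suc l) (net_of_params ns \<theta>)) x = map (\<lambda>k.
    unit_eval (net_eval (take l (net_of_params ns \<theta>)) x) (map (\<lambda>i. \<theta> (l, k, i)) [0..<ns ! l], \<theta> (l, k, ns ! l)))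
    [0..<ns ! Suc l]"
proof -
  have "l < length (net_of_params ns \<theta>)"
    using assms by (simp add: net_of_params_def)
  then show ?thesis
    using assms by (simp add: take_Suc_conv_app_nth net_eval_def net_of_params_def layer_eval_def)
qed

text \<open>Each layer at most multiplies the complexity by \<open>2 w + 1\<close>: a unit of width \<open>n \<le> w\<close>
  is a maximum of \<open>n\<close> absolute values.\<close>
lemma net_eval_take_piecewise_affine:
  assumes "\<forall>n\<in>set ns. n \<le> w" "length x = ns ! 0" "l < length ns"
  shows "\<exists>Fs. length Fs = ns ! l \<and>
    (\<forall>f\<in>set Fs. piecewise_affine ({..<length ns - 1} \<times> {..<w} \<times> {..w}) ((2 * w + 1) ^ l) f) \<and>
    (\<forall>\<theta>. net_eval (take l (net_of_params ns \<theta>)) x = map (\<lambda>f. f \<theta>) Fs)"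
  using assms(3)
proof (induction l)
  case 0
  show ?case
    by (rule exI[of _ "map (\<lambda>a _. a) x"])
      (simp add: assms(2) net_eval_def map_idI piecewise_affine_const[unfolded One_nat_def])
next
  case (Suc l)
  let ?V = "{..<length ns - 1} \<times> {..<w} \<times> {..w}"
  define M where "M = (2 * w + 1) ^ l"
  obtain Fs where Fs: "length Fs = ns ! l" "\<forall>f\<in>set Fs. piecewise_affine ?V M f"
    "\<And>\<theta>. net_eval (take l (net_of_params ns \<theta>)) x = map (\<lambda>f. f \<theta>) Fs"
    using Suc by (auto simp: M_def)
  have bounds: "ns ! l \<le> w" "ns ! Suc l \<le> w"
    using assms(1) Suc.prems by auto
  define unit where "unit = (\<lambda>k \<theta>. unit_eval (map (\<lambda>f. f \<theta>) Fs)
    (map (\<lambda>i. \<theta> (l, k, i)) [0..<ns ! l], \<theta> (l, k, ns ! l)))"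
  have "piecewise_affine ?V ((2 * w + 1) ^ Suc l) (unit k)" if "k < ns ! Suc l" for k
  proof -
    define Ws :: "((nat \<times> nat \<times> nat \<Rightarrow> real) \<Rightarrow> real) list"
      where "Ws = map (\<lambda>i \<theta>. \<theta> (l, k, i)) [0..<ns ! l]"
    have "\<forall>v\<in>set Ws. affine_in ?V v" "affine_in ?V (\<lambda>\<theta>. \<theta> (l, k, ns ! l))"
      using Suc.prems that bounds by (auto simp: Ws_def intro!: affine_in_coord)
    from piecewise_affine_unit_eval[OF Fs(2) _ this]
    have "piecewise_affine ?V (1 + ns ! l * (2 * M)) (unit k)"
      using Fs(1) by (simp add: unit_def Ws_def comp_def)
    moreover have "1 + ns ! l * (2 * M) \<le> (2 * w + 1) ^ Suc l"
    proof -
      have "(2 * w + 1) ^ Suc l = M + w * (2 * M)" "1 \<le> M"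
        by (simp_all add: M_def)
      then show ?thesis
        using bounds(1) mult_le_mono1[of "ns ! l" w "2 * M"] by linarith
    qed
    ultimately show ?thesis
      by (rule piecewise_affine_mono)
  qed
  moreover have "net_eval (take (Suc l) (net_of_params ns \<theta>)) x = map (\<lambda>k. unit k \<theta>) [0..<ns ! Suc l]" for \<theta>
    using net_eval_take_Suc[of l ns \<theta> x] Suc.prems Fs(3) by (simp add: unit_def)
  ultimately show ?case
    by (intro exI[of _ "map unit [0..<ns ! Suc l]"]) auto
qed

lemma net_output_piecewise_affine:
  assumes "\<forall>n\<in>set ns. n \<le> w" "length x = ns ! 0" "ns \<noteq> []" "last ns = 1"
  shows "piecewise_affine ({..<length ns - 1} \<times> {..<w} \<times> {..w}) ((2 * w + 1) ^ (length ns - 1))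
    (\<lambda>\<theta>. hd (net_eval (net_of_params ns \<theta>) x))"
proof -
  obtain Fs where Fs: "length Fs = 1"
    "\<forall>f\<in>set Fs. piecewise_affine ({..<length ns - 1} \<times> {..<w} \<times> {..w}) ((2 * w + 1) ^ (length ns - 1)) f"
    "\<forall>\<theta>. net_eval (take (length ns - 1) (net_of_params ns \<theta>)) x = map (\<lambda>f. f \<theta>) Fs"
    using net_eval_take_piecewise_affine[OF assms(1,2), of "length ns - 1"] assms(3,4)
    by (auto simp: last_conv_nth)
  then obtain f where "Fs = [f]"
    by (metis One_nat_def length_0_conv length_Suc_conv)
  then show ?thesis
    using Fs(2,3) by (simp add: net_of_params_def)
qed

definition labelling :: "real list set \<Rightarrow> nat list \<Rightarrow> (nat \<times> nat \<times> nat \<Rightarrow> real) \<Rightarrow> real list set" where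
  "labelling S ns \<theta> = {x\<in>S. 0 \<le> hd (net_eval (net_of_params ns \<theta>) x)}"

lemma card_range_labelling_le:
  assumes "\<forall>n\<in>set ns. n \<le> w" "\<forall>x\<in>S. length x = ns ! 0" "ns \<noteq> []" "last ns = 1" "finite S"
    and M: "M = (2 * w + 1) ^ (length ns - 1)"
  shows "card (range (labelling S ns)) \<le> (card S * (M\<^sup>2 + M) + 1) ^ ((length ns - 1) * w * (w + 1))"
proof -
  let ?V = "{..<length ns - 1} \<times> {..<w} \<times> {..w}"
  have "piecewise_affine ?V M (\<lambda>\<theta>. hd (net_eval (net_of_params ns \<theta>) x))" if "x \<in> S" for x
    unfolding M using net_output_piecewise_affine[OF assms(1) _ assms(3,4)] assms(2) that by blast
  then have "determined_by_signs ?V (card S * (M\<^sup>2 + M)) (labelling S ns)"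
    unfolding labelling_def[abs_def]
    by (intro determined_by_signs_Collect assms(5) ballI determined_by_signs_sign)
  then have "card (range (labelling S ns)) \<le> (card S * (M\<^sup>2 + M) + 1) ^ card ?V"
    by (rule card_range_le_if_determined_by_signs[rotated]) simp
  also have "card ?V = (length ns - 1) * w * (w + 1)"
    by (simp add: card_cartesian_product mult.assoc distrib_left)
  finally show ?thesis .
qed

lemma shattered_subset_labellings:
  assumes "shatters d (linf_net_class d w L) S"
  shows "Pow S \<subseteq> (\<Union>hs\<in>{hs. set hs \<subseteq> {1..w} \<and> length hs = L}. range (labelling S ([d] @ hs @ [1])))"
proof
  fix T assume T: "T \<in> Pow S"
  then obtain g where g: "g \<in> linf_net_class d w L" "\<forall>x\<in>S. (0 \<le> g x) = (x \<in> T)"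
    using assms unfolding shatters_def by blast
  then obtain net hs where hs: "g = (\<lambda>x. hd (net_eval net x))" "length hs = L"
    "\<forall>h\<in>set hs. 1 \<le> h \<and> h \<le> w" "net_shape ([d] @ hs @ [1]) net"
    unfolding linf_net_class_def by blast
  obtain \<theta> where "net_of_params ([d] @ hs @ [1]) \<theta> = net"
    using net_of_params_surj[OF hs(4)] .
  then have "T = labelling S ([d] @ hs @ [1]) \<theta>"
    using g(2) T hs(1) by (auto simp: labelling_def)
  then show "T \<in> (\<Union>hs\<in>{hs. set hs \<subseteq> {1..w} \<and> length hs = L}. range (labelling S ([d] @ hs @ [1])))"
    using hs(2,3) by (intro UN_I[of hs]) auto
qed

lemma two_pow_card_shattered_le:
  fixes d w L :: nat
  assumes "1 \<le> w" "d \<le> w" "finite S" "shatters d (linf_net_class d w L) S"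
    and M: "M = (2 * w + 1) ^ (L + 1)"
  shows "2 ^ card S \<le> w ^ L * (card S * (M\<^sup>2 + M) + 1) ^ ((L + 1) * w * (w + 1))"
proof -
  define H where "H = {hs. set hs \<subseteq> {1..w} \<and> length hs = L}"
  have bound: "card (range (labelling S ([d] @ hs @ [1])))
      \<le> (card S * (M\<^sup>2 + M) + 1) ^ ((L + 1) * w * (w + 1))" if "hs \<in> H" for hs
  proof -
    have "length ([d] @ hs @ [1]) - 1 = L + 1" "\<forall>n\<in>set ([d] @ hs @ [1]). n \<le> w"
      using that assms(1,2) by (auto simp: H_def)
    then show ?thesis
      using card_range_labelling_le[of "[d] @ hs @ [1]" w S M] assms(3,4) M
      by (simp add: shatters_def)
  qed
  have "card H = w ^ L"
    by (simp add: H_def card_lists_length_eq)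
  then have "(\<Sum>hs\<in>H. card (range (labelling S ([d] @ hs @ [1]))))
      \<le> w ^ L * (card S * (M\<^sup>2 + M) + 1) ^ ((L + 1) * w * (w + 1))"
    using sum_bounded_above[of H "\<lambda>hs. card (range (labelling S ([d] @ hs @ [1])))", OF bound] by simp
  moreover have "2 ^ card S \<le> (\<Sum>hs\<in>H. card (range (labelling S ([d] @ hs @ [1]))))"
  proof -
    have "(\<Union>hs\<in>H. range (labelling S ([d] @ hs @ [1]))) \<subseteq> Pow S"
      by (auto simp: labelling_def)
    then have "card (Pow S) \<le> card (\<Union>hs\<in>H. range (labelling S ([d] @ hs @ [1])))"
      using shattered_subset_labellings[OF assms(4)] assms(3) unfolding H_def
      by (intro card_mono) (auto intro: finite_subset)
    also have "\<dots> \<le> (\<Sum>hs\<in>H. card (range (labelling S ([d] @ hs @ [1]))))"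
      by (rule card_UN_le) (simp add: H_def finite_lists_length_eq)
    finally show ?thesis
      using assms(3) by (simp add: card_Pow)
  qed
  ultimately show ?thesis
    by linarith
qed

lemma half_le_ln_2: "1 / 2 \<le> ln (2 :: real)"
proof -
  have "exp (1 / 2 :: real) ^ 2 = exp 1"
    by (simp add: exp_add[symmetric] power2_eq_square)
  also have "\<dots> \<le> 2 ^ 2"
    using exp_le by simp
  finally have "exp (1 / 2 :: real) \<le> 2"
    by (rule power2_le_imp_le) simp
  then show ?thesis
    by (metis exp_gt_zero ln_exp ln_le_cancel_iff zero_less_numeral)
qed

text \<open>The usual way out of \<open>2\<^sup>n \<le> A (c n)\<^sup>P\<close>: \<open>ln (c n) \<le> ln (4 c P) + n / (4 P)\<close>
  absorbs the logarithm of \<open>n\<close> into a quarter of \<open>n\<close>.\<close>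
lemma le_four_ln_if_two_pow_le:
  fixes n P :: nat and A c :: real
  assumes "1 \<le> n" "1 \<le> P" "0 < A" "0 < c" "2 ^ n \<le> A * (c * n) ^ P"
  shows "n \<le> 4 * ln (A * (4 * c * P) ^ P)"
proof -
  have log: "n * ln 2 \<le> ln A + P * ln (c * n)"
  proof -
    have "ln (2 ^ n) \<le> ln (A * (c * n) ^ P)"
      using assms by (subst ln_le_cancel_iff) auto
    then show ?thesis
      using assms by (simp add: ln_mult ln_realpow)
  qed
  have "c * n = 4 * c * P * (n / (4 * P))"
    using assms by simp
  also have "ln \<dots> = ln (4 * c * P) + ln (n / (4 * P))"
    by (rule ln_mult_pos) (use assms in auto)
  also have "\<dots> \<le> ln (4 * c * P) + n / (4 * P)"
    using assms ln_le_minus_one[of "n / (4 * P)"] by simp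
  finally have "P * ln (c * n) \<le> P * (ln (4 * c * P) + n / (4 * P))"
    by (simp add: mult_left_mono)
  also have "\<dots> = P * ln (4 * c * P) + n / 4"
    using assms(2) by (simp add: field_simps)
  finally have "n * ln 2 \<le> ln A + P * ln (4 * c * P) + n / 4"
    using log by linarith
  moreover have "n / 2 \<le> n * ln 2"
    using mult_left_mono[OF half_le_ln_2, of "real n"] by simp
  ultimately have "n \<le> 4 * (ln A + P * ln (4 * c * P))"
    by argo
  also have "\<dots> = 4 * ln (A * (4 * c * P) ^ P)"
    using assms by (simp add: ln_mult ln_realpow)
  finally show ?thesis .
qed

lemma depth_width_exponent_le:
  fixes L w :: nat
  assumes "1 \<le> L" "1 \<le> w"
  shows "L + 4 * (L + 1) * ((L + 1) * w * (w + 1)) + 5 * ((L + 1) * w * (w + 1)) \<le> 53 * L\<^sup>2 * w ^ 4"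
proof -
  have "(L + 1) * w * (w + 1) \<le> (2 * L) * w * (2 * w)"
    using assms by (intro mult_le_mono) auto
  then have P: "(L + 1) * w * (w + 1) \<le> 4 * (L * w\<^sup>2)"
    by (simp add: power2_eq_square algebra_simps)
  have "4 * (L + 1) * ((L + 1) * w * (w + 1)) \<le> (4 * (2 * L)) * (4 * (L * w\<^sup>2))"
    using assms by (intro mult_le_mono[OF _ P]) auto
  also have "\<dots> = 32 * (L\<^sup>2 * w\<^sup>2)"
    by (simp add: power2_eq_square algebra_simps)
  finally have big: "4 * (L + 1) * ((L + 1) * w * (w + 1)) \<le> 32 * (L\<^sup>2 * w\<^sup>2)" .
  have L: "L \<le> L\<^sup>2" and w: "1 \<le> w\<^sup>2" "w\<^sup>2 \<le> w ^ 4"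
    using assms power_increasing[of 2 4 w] by (simp_all add: power2_eq_square)
  have "L * 1 \<le> L\<^sup>2 * w ^ 4"
    using w by (intro mult_le_mono[OF L]) linarith
  moreover have "L * w\<^sup>2 \<le> L\<^sup>2 * w ^ 4" "L\<^sup>2 * w\<^sup>2 \<le> L\<^sup>2 * w ^ 4"
    by (rule mult_le_mono[OF L w(2)], rule mult_le_mono2[OF w(2)])
  ultimately show ?thesis
    using P big by linarith
qed

lemma width_depth_product_le_power:
  fixes L w P :: nat
  assumes "1 \<le> L" "1 \<le> w" and P: "P = (L + 1) * w * (w + 1)"
  shows "w ^ L * ((2 * w + 1) ^ (L + 1)) ^ (2 * P) * (12 * P) ^ P \<le> (L + w + 2) ^ (53 * L\<^sup>2 * w ^ 4)"
proof -
  define Q where "Q = L + w + 2"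
  have "w ^ L \<le> Q ^ L"
    by (rule power_mono) (simp_all add: Q_def)
  moreover have "((2 * w + 1) ^ (L + 1)) ^ (2 * P) \<le> (Q\<^sup>2) ^ ((L + 1) * (2 * P))"
  proof -
    have "2 * w + 1 \<le> Q\<^sup>2"
      by (simp add: Q_def power2_eq_square algebra_simps)
    from power_mono[OF this, of "(L + 1) * (2 * P)"] show ?thesis
      by (simp only: power_mult)
  qed
  moreover have "(12 * P) ^ P \<le> (Q ^ 5) ^ P"
  proof (rule power_mono)
    have "12 \<le> Q\<^sup>2"
      using assms mult_le_mono[of 4 Q 4 Q] by (simp add: Q_def power2_eq_square)
    moreover have "P \<le> Q ^ 3"
      unfolding P power3_eq_cube Q_def by (intro mult_le_mono) auto
    ultimately have "12 * P \<le> Q\<^sup>2 * Q ^ 3"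
      by (rule mult_le_mono)
    then show "12 * P \<le> Q ^ 5"
      by (simp flip: power_add)
  qed simp
  ultimately have "w ^ L * ((2 * w + 1) ^ (L + 1)) ^ (2 * P) * (12 * P) ^ P
      \<le> Q ^ L * (Q\<^sup>2) ^ ((L + 1) * (2 * P)) * (Q ^ 5) ^ P"
    by (intro mult_le_mono)
  also have "\<dots> = Q ^ (L + 4 * (L + 1) * P + 5 * P)"
    by (simp only: power_mult[symmetric] power_add[symmetric]) (simp add: algebra_simps)
  also have "\<dots> \<le> Q ^ (53 * L\<^sup>2 * w ^ 4)"
    using depth_width_exponent_le[OF assms(1,2)] unfolding P by (rule power_increasing) (simp add: Q_def)
  finally show ?thesis
    by (simp only: Q_def)
qed

lemma mult_square_add_le:
  fixes n M :: nat
  assumes "1 \<le> n" "1 \<le> M"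
  shows "n * (M\<^sup>2 + M) + 1 \<le> 3 * n * M\<^sup>2"
proof -
  have "M \<le> M\<^sup>2" "1 \<le> M\<^sup>2"
    using assms(2) by (simp_all add: power2_eq_square)
  have "n * (M\<^sup>2 + M) + 1 = n * M\<^sup>2 + n * M + 1"
    by (simp add: algebra_simps)
  also have "\<dots> \<le> n * M\<^sup>2 + n * M\<^sup>2 + n * M\<^sup>2"
    using assms(1) \<open>M \<le> M\<^sup>2\<close> \<open>1 \<le> M\<^sup>2\<close>
    by (intro add_mono order.refl mult_le_mono2) (simp_all add: Suc_le_eq)
  finally show ?thesis
    by simp
qed

lemma card_shattered_le:
  fixes d w L :: nat
  assumes "1 \<le> L" "1 \<le> w" "d \<le> w" "finite S" "shatters d (linf_net_class d w L) S"
  shows "card S \<le> 212 * real L ^ 2 * real w ^ 4 * ln (real (L + w + 2))"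
proof (cases "card S = 0")
  case True
  then show ?thesis
    by simp
next
  case False
  define n where "n = card S"
  define P where "P = (L + 1) * w * (w + 1)"
  define M where "M = (2 * w + 1) ^ (L + 1)"
  have "1 \<le> n" "1 \<le> P" "1 \<le> M"
    using False assms(2) by (simp_all add: n_def P_def M_def del: power_Suc)
  have "2 ^ n \<le> w ^ L * (n * (M\<^sup>2 + M) + 1) ^ P"
    using two_pow_card_shattered_le[OF assms(2-5) M_def] by (simp add: n_def P_def)
  also have "\<dots> \<le> w ^ L * (3 * n * M\<^sup>2) ^ P"
    using mult_square_add_le[OF \<open>1 \<le> n\<close> \<open>1 \<le> M\<close>] by (simp add: power_mono)
  also have "\<dots> = (w ^ L * M ^ (2 * P)) * (3 * n) ^ P"
    unfolding power_mult[of M 2 P] power_mult_distrib by (simp only: mult_ac)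
  finally have "real (2 ^ n) \<le> real (w ^ L * M ^ (2 * P) * (3 * n) ^ P)"
    by (simp only: of_nat_le_iff)
  then have "2 ^ n \<le> real (w ^ L * M ^ (2 * P)) * (3 * real n) ^ P"
    by simp
  then have "n \<le> 4 * ln (real (w ^ L * M ^ (2 * P)) * (4 * 3 * real P) ^ P)"
    using \<open>1 \<le> n\<close> \<open>1 \<le> P\<close> \<open>1 \<le> M\<close> assms(2) by (intro le_four_ln_if_two_pow_le) auto
  also have "\<dots> = 4 * ln (real (w ^ L * M ^ (2 * P) * (12 * P) ^ P))"
    by simp
  also have "\<dots> \<le> 4 * ln (real ((L + w + 2) ^ (53 * L\<^sup>2 * w ^ 4)))"
  proof -
    have "real (w ^ L * M ^ (2 * P) * (12 * P) ^ P) \<le> real ((L + w + 2) ^ (53 * L\<^sup>2 * w ^ 4))"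
      using width_depth_product_le_power[OF assms(1,2) P_def] unfolding M_def by (simp only: of_nat_le_iff)
    moreover have "0 < real (w ^ L * M ^ (2 * P) * (12 * P) ^ P)"
      using \<open>1 \<le> P\<close> \<open>1 \<le> M\<close> assms(2) by simp
    ultimately show ?thesis
      by (simp add: ln_mono)
  qed
  also have "\<dots> = 212 * real L ^ 2 * real w ^ 4 * ln (real (L + w + 2))"
    by (simp only: of_nat_power ln_realpow) simp
  finally show ?thesis
    by (simp add: n_def)
qed

lemma VCdim_linf_net_class_le:
  fixes d w L :: nat
  assumes "1 \<le> L" "1 \<le> w" "d \<le> w"
  shows "VCdim d (linf_net_class d w L) \<le> ereal (212 * real L ^ 2 * real w ^ 4 * ln (real (L + w + 2)))"
  unfolding VCdim_def
  using card_shattered_le[OF assms] by (auto intro!: Sup_least)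

theorem lemma7:
  "\<exists>(C::real) (k::nat). \<forall>d w L :: nat. 1 \<le> L \<longrightarrow> 1 \<le> w \<longrightarrow> d \<le> w \<longrightarrow>
     VCdim d (linf_net_class d w L)
       \<le> ereal (C * real L ^ 2 * real w ^ 4 * (ln (real (L + w + 2))) ^ k)"
  using VCdim_linf_net_class_le by (intro exI[of _ 212] exI[of _ 1]) simp

end
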